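(* Let $q$ be any prime power and let $\mathcal{C}$ be the Hermitian-Lifted Code (defined in the context). Then $\mathcal{C}$ has locality $q$ and availability $q^2-1$: for every coordinate (indexed by a point $P \in \mathcal{X}$) there are $q^2-1$ pairwise disjoint sets of coordinates, each of size $q$ and not containing $P$, such that for every codeword $c \in \mathcal{C}$ the symbol $c_P$ can be recovered from the symbols of $c$ indexed by any one of these sets.
   Context: Let $q$ be a prime power. Let $\mathcal{X} = \{(x,y) \in (\mathbb{F}_{q^2})^2 : x^q + x = y^{q+1}\}$ be the set of affine $\mathbb{F}_{q^2}$-rational points of the Hermitian curve; $|\mathcal{X}| = q^3$. For $\alpha,\beta \in \mathbb{F}_{q^2}$, let $L_{\alpha,\beta}(t) = (\alpha t + \beta, t)$, and $\mathcal{L} = \{L_{\alpha,\beta} : \alpha,\beta \in \mathbb{F}_{q^2}\}$. Let $\mathcal{F}$ be the set of $f \in \mathbb{F}_{q^2}[x,y]$ such that for every $L \in \mathcal{L}$ there exists $g \in \mathbb{F}_{q^2}[t]$ with $\deg g \leq q-1$ and $f(L(t)) = g(t)$ for all $t \in \mathbb{F}_{q^2}$ with $L(t) \in \mathcal{X}$. The Hermitian-Lifted Code is $\mathcal{C} = \{ (f(P))_{P \in \mathcal{X}} : f \in \mathcal{F}\}$. A set $R$ of coordinates not containing $i$ is a recovery set for coordinate $i$ if $c_i$ is determined by $(c_j)_{j\in R}$ for every codeword $c$; a code has locality $r$ and availability $t$ if every coordinate has $t$ pairwise disjoint recovery sets each of size at most $r$. *)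

theory Defs
  imports "HOL-Computational_Algebra.Polynomial"
begin

text \<open>The field F_{q^2} is modelled as a finite field type 'a with CARD('a) = q^2.
  Since every function F^2 -> F over a finite field is a polynomial function,
  elements of F[x,y] are represented by their evaluation maps 'a * 'a => 'a.\<close>

definition prime_power :: "nat \<Rightarrow> bool" where
  "prime_power q \<longleftrightarrow> (\<exists>p k. prime p \<and> k > 0 \<and> q = p ^ k)"

definition herm_points :: "nat \<Rightarrow> ('a::field \<times> 'a) set" where
  "herm_points q = {(x, y). x ^ q + x = y ^ (q + 1)}"

definition herm_line :: "'a::field \<Rightarrow> 'a \<Rightarrow> 'a \<Rightarrow> 'a \<times> 'a" where
  "herm_line \<alpha> \<beta> t = (\<alpha> * t + \<beta>, t)"

definition herm_lift_funs :: "nat \<Rightarrow> ('a::field \<times> 'a \<Rightarrow> 'a) set" where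
  "herm_lift_funs q = {f. \<forall>\<alpha> \<beta>. \<exists>g :: 'a poly. degree g \<le> q - 1 \<and>
      (\<forall>t. herm_line \<alpha> \<beta> t \<in> herm_points q \<longrightarrow> f (herm_line \<alpha> \<beta> t) = poly g t)}"

text \<open>Codewords: evaluation vectors (f(P))_{P in X}, represented as functions on X
  (set to 0 outside X).\<close>
definition herm_lifted_code :: "nat \<Rightarrow> ('a::field \<times> 'a \<Rightarrow> 'a) set" where
  "herm_lifted_code q = (\<lambda>f. \<lambda>P. if P \<in> herm_points q then f P else 0) ` herm_lift_funs q"

definition recovery_set :: "('i \<Rightarrow> 'a::zero) set \<Rightarrow> 'i \<Rightarrow> 'i set \<Rightarrow> bool" where
  "recovery_set C P R \<longleftrightarrow> P \<notin> R \<and>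
     (\<exists>\<phi>. \<forall>c\<in>C. c P = \<phi> (\<lambda>Q. if Q \<in> R then c Q else 0))"

end

theory Submission
  imports Defs "HOL-Computational_Algebra.Primes" "HOL-Library.Disjoint_Sets"
begin

(* Over the field with q^2 elements, x |-> x^q is an additive involution. For a point
   (x0, y0) of the curve and a slope alpha ~= y0^q, substituting x = x0 + alpha s,
   y = y0 + s into the curve equation leaves gamma^q s^q + gamma s = s^(q+1) with
   gamma = alpha - y0^q, which is solved by s = gamma^q / z for each of the q elements z
   with z^q + z = 1. So each of these q^2 - 1 lines through (x0, y0) meets the curve in q
   further points, and distinct lines share only (x0, y0). On a line a codeword is a
   polynomial of degree below q in y, so its value at (x0, y0) is interpolated from its
   values at those q points. *)

lemma of_nat_card_UNIV_eq_0: "of_nat (card (UNIV :: 'a set)) = (0::'a::{finite,ring_1})"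
proof -
  have "(\<Sum>x\<in>UNIV. x) = (\<Sum>x\<in>UNIV. x + (1::'a))"
    by (rule sum.reindex_bij_witness[of _ "\<lambda>y. y + 1" "\<lambda>y. y - 1"]) auto
  also have "\<dots> = (\<Sum>x\<in>UNIV. x) + of_nat (card (UNIV :: 'a set))"
    by (simp add: sum.distrib)
  finally show ?thesis by simp
qed

lemma CHAR_eq_if_card_UNIV_eq_power:
  assumes "prime p" "card (UNIV :: 'a set) = p ^ n" "n > 0"
  shows "CHAR('a::{finite,field}) = p"
proof -
  have "prime CHAR('a)"
    by (intro prime_CHAR_semidom finite_imp_CHAR_pos) simp
  moreover have "of_nat (p ^ n) = (0::'a)"
    using of_nat_card_UNIV_eq_0[where 'a='a] assms(2) by simp
  then have "CHAR('a) dvd p ^ n"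
    by (simp only: of_nat_eq_0_iff_char_dvd)
  ultimately show ?thesis
    using assms(1,3) by (metis prime_dvd_power primes_dvd_imp_eq)
qed

lemma power_card_UNIV_eq_self: "x ^ card (UNIV :: 'a set) = (x::'a::{finite,field})"
proof (cases "x = 0")
  case False
  define U where "U = UNIV - {0::'a}"
  have "bij_betw ((*) x) U U"
    using False by (intro bij_betwI[of _ _ _ "\<lambda>y. y / x"]) (auto simp: U_def)
  from prod.reindex_bij_betw[OF this, of "\<lambda>y. y"]
  have "\<Prod>U = (\<Prod>y\<in>U. x * y)"
    by simp
  also have "\<dots> = x ^ card U * \<Prod>U"
    by (simp add: prod.distrib)
  finally have "x ^ card U = 1"
    by (simp add: U_def)
  moreover have "card (UNIV :: 'a set) = Suc (card U)"
    by (simp add: U_def card_Diff_singleton Suc_diff_1 finite_UNIV_card_ge_0)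
  ultimately show ?thesis
    by simp
qed (simp add: finite_UNIV_card_ge_0)

lemma frobenius_add:
  fixes x y :: "'a::{finite,field}"
  assumes "prime p" "card (UNIV :: 'a set) = p ^ n" "n > 0" "q = p ^ k"
  shows "(x + y) ^ q = x ^ q + y ^ q"
  using assms by (intro freshmans_dream') (simp_all add: CHAR_eq_if_card_UNIV_eq_power)

lemma card_fibre_eq_if_card_eq_mult:
  fixes f :: "'a \<Rightarrow> 'b"
  assumes "finite A" "finite B" "f ` A \<subseteq> B" "card B \<le> m" "card A = m * n"
    and fibre_le: "\<And>b. b \<in> B \<Longrightarrow> card {a\<in>A. f a = b} \<le> n"
    and "b \<in> B"
  shows "card {a\<in>A. f a = b} = n"
proof (rule ccontr)
  assume "card {a\<in>A. f a = b} \<noteq> n"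
  then have less: "card {a\<in>A. f a = b} < n"
    using fibre_le[OF \<open>b \<in> B\<close>] by simp
  have "card A = card (\<Union>b\<in>B. {a\<in>A. f a = b})"
    using assms(3) by (intro arg_cong[where f = card]) blast
  also have "\<dots> = (\<Sum>b\<in>B. card {a\<in>A. f a = b})"
    using assms(1,2) by (intro card_UN_disjoint) auto
  also have "\<dots> < (\<Sum>b\<in>B. n)"
    using assms(2,7) less fibre_le by (intro sum_strict_mono_ex1) auto
  also have "\<dots> \<le> m * n"
    using assms(4) by simp
  finally show False
    using assms(5) by simp
qed

lemma card_power_eq_affine_le:
  fixes c d :: "'a::idom"
  assumes "q \<ge> 2"
  shows "card {z. z ^ q = c * z + d} \<le> q"
proof -
  define p where "p = monom 1 q + [:-d, -c:]"
  have "degree [:-d, -c:] < degree (monom (1::'a) q)"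
    using assms by (simp add: degree_monom_eq)
  then have "degree p = q"
    by (simp add: p_def degree_add_eq_left degree_monom_eq)
  then have "card {z. poly p z = 0} \<le> q"
    using assms card_poly_roots_bound[of p] by fastforce
  moreover have "{z. poly p z = 0} = {z. z ^ q = c * z + d}"
    by (auto simp: p_def poly_monom algebra_simps)
  ultimately show ?thesis
    by simp
qed

lemma card_trace_fibre_one:
  fixes q :: nat
  assumes add_power: "\<And>x y::'a. (x + y) ^ q = x ^ q + y ^ q"
    and power_power: "\<And>x::'a. x ^ (q * q) = x"
    and card: "card (UNIV :: 'a::{finite,field} set) = q ^ 2" and "q \<ge> 2"
  shows "card {z::'a. z ^ q + z = 1} = q"
proof -
  (* The trace maps into the at most q solutions of w^q = w with fibres of size at most q;
     since there are q * q elements, every fibre over a value w with w^q = w is full. *)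
  define B where "B = {w::'a. w ^ q = 1 * w + 0}"
  have "(z ^ q + z) ^ q = 1 * (z ^ q + z) + 0" for z :: 'a
    by (simp add: add_power power_mult[symmetric] power_power)
  then have "(\<lambda>z. z ^ q + z) ` UNIV \<subseteq> B"
    by (auto simp: B_def)
  moreover have "card {z \<in> UNIV. z ^ q + z = w} \<le> q" for w :: 'a
  proof -
    have "{z \<in> UNIV. z ^ q + z = w} = {z. z ^ q = (-1) * z + w}"
      by (auto simp: algebra_simps)
    then show ?thesis
      using card_power_eq_affine_le[OF \<open>q \<ge> 2\<close>, of "-1" w] by (simp only:)
  qed
  moreover have "card B \<le> q"
    unfolding B_def by (rule card_power_eq_affine_le[OF \<open>q \<ge> 2\<close>])
  moreover have "1 \<in> B"
    by (simp add: B_def)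
  ultimately show ?thesis
    using card_fibre_eq_if_card_eq_mult[of UNIV B "\<lambda>z. z ^ q + z" q q 1] card
    by (simp add: power2_eq_square)
qed

lemma recovery_setI:
  assumes "P \<notin> R"
    and determined: "\<And>c c'. c \<in> C \<Longrightarrow> c' \<in> C \<Longrightarrow> (\<And>Q. Q \<in> R \<Longrightarrow> c Q = c' Q) \<Longrightarrow>
      c P = c' P"
  shows "recovery_set C P R"
proof -
  define restr where "restr c = (\<lambda>Q. if Q \<in> R then c Q else 0)" for c :: "'a \<Rightarrow> 'b"
  define \<phi> where "\<phi> h = (SOME c. c \<in> C \<and> restr c = h) P" for h
  have "c P = \<phi> (restr c)" if "c \<in> C" for c
  proof -
    have "\<exists>c'. c' \<in> C \<and> restr c' = restr c"
      using that by blast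
    then obtain c' where "\<phi> (restr c) = c' P" "c' \<in> C" "restr c' = restr c"
      unfolding \<phi>_def by (metis (mono_tags, lifting) someI_ex)
    moreover have "c Q = c' Q" if "Q \<in> R" for Q
      using \<open>restr c' = restr c\<close> that by (metis restr_def)
    ultimately show ?thesis
      using determined \<open>c \<in> C\<close> by metis
  qed
  then show ?thesis
    unfolding recovery_set_def restr_def using \<open>P \<notin> R\<close> by blast
qed

lemma herm_lifted_code_on_line:
  assumes "c \<in> herm_lifted_code q"
  obtains g where "degree g \<le> q - 1"
    and "\<And>t. herm_line \<alpha> \<beta> t \<in> herm_points q \<Longrightarrow> c (herm_line \<alpha> \<beta> t) = poly g t"
  using assms unfolding herm_lifted_code_def herm_lift_funs_def by force

lemma inj_herm_line: "inj (herm_line \<alpha> \<beta>)"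
  by (rule injI) (simp add: herm_line_def)

lemma recovery_set_herm_line:
  fixes T :: "'a::field set"
  assumes "herm_line \<alpha> \<beta> ` T \<subseteq> herm_points q" "card T = q" "q > 0"
    and "herm_line \<alpha> \<beta> t0 \<in> herm_points q" "t0 \<notin> T"
  shows "recovery_set (herm_lifted_code q) (herm_line \<alpha> \<beta> t0) (herm_line \<alpha> \<beta> ` T)"
proof (rule recovery_setI)
  show "herm_line \<alpha> \<beta> t0 \<notin> herm_line \<alpha> \<beta> ` T"
    using \<open>t0 \<notin> T\<close> inj_herm_line by (metis inj_image_mem_iff)
next
  fix c c' :: "'a \<times> 'a \<Rightarrow> 'a"
  assume "c \<in> herm_lifted_code q" "c' \<in> herm_lifted_code q"
    and agree: "\<And>Q. Q \<in> herm_line \<alpha> \<beta> ` T \<Longrightarrow> c Q = c' Q"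
  obtain g where g: "degree g \<le> q - 1"
    "\<And>t. herm_line \<alpha> \<beta> t \<in> herm_points q \<Longrightarrow> c (herm_line \<alpha> \<beta> t) = poly g t"
    using herm_lifted_code_on_line[OF \<open>c \<in> herm_lifted_code q\<close>] by blast
  obtain g' where g': "degree g' \<le> q - 1"
    "\<And>t. herm_line \<alpha> \<beta> t \<in> herm_points q \<Longrightarrow> c' (herm_line \<alpha> \<beta> t) = poly g' t"
    using herm_lifted_code_on_line[OF \<open>c' \<in> herm_lifted_code q\<close>] by blast
  have "g = g'"
  proof (rule poly_eqI_degree[of T])
    fix t assume "t \<in> T"
    then show "poly g t = poly g' t"
      using assms(1) agree g(2) g'(2) by (metis image_subset_iff imageI)
  qed (use g g' assms(2,3) in auto)
  then show "c (herm_line \<alpha> \<beta> t0) = c' (herm_line \<alpha> \<beta> t0)"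
    using g(2) g'(2) assms(4) by simp
qed

lemma herm_points_shift_iff:
  fixes x0 y0 \<alpha> s :: "'a::field"
  assumes add_power: "\<And>x y::'a. (x + y) ^ q = x ^ q + y ^ q"
    and power_power: "\<And>x::'a. x ^ (q * q) = x"
    and "(x0, y0) \<in> herm_points q"
  shows "(x0 + \<alpha> * s, y0 + s) \<in> herm_points q \<longleftrightarrow>
    (\<alpha> - y0 ^ q) ^ q * s ^ q + (\<alpha> - y0 ^ q) * s = s ^ (q + 1)"
proof -
  have "(\<alpha> - y0 ^ q) ^ q + y0 = \<alpha> ^ q"
    using add_power[of "\<alpha> - y0 ^ q" "y0 ^ q"] by (simp add: power_mult[symmetric] power_power)
  then have \<gamma>: "(\<alpha> - y0 ^ q) ^ q = \<alpha> ^ q - y0"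
    by (simp add: eq_diff_eq)
  have lhs: "(x0 + \<alpha> * s) ^ q + (x0 + \<alpha> * s) = y0 ^ (q + 1) + (\<alpha> ^ q * s ^ q + \<alpha> * s)"
    using assms(3) by (simp add: herm_points_def add_power power_mult_distrib)
  have rhs: "(y0 + s) ^ (q + 1) = y0 ^ (q + 1) + (y0 ^ q * s + y0 * s ^ q + s ^ (q + 1))"
    by (simp add: add_power algebra_simps)
  have "(x0 + \<alpha> * s, y0 + s) \<in> herm_points q \<longleftrightarrow>
      (x0 + \<alpha> * s) ^ q + (x0 + \<alpha> * s) = (y0 + s) ^ (q + 1)"
    by (simp add: herm_points_def)
  also have "\<dots> \<longleftrightarrow> \<alpha> ^ q * s ^ q + \<alpha> * s = y0 ^ q * s + y0 * s ^ q + s ^ (q + 1)"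
    by (simp only: lhs rhs add_left_cancel)
  also have "\<dots> \<longleftrightarrow> (\<alpha> ^ q - y0) * s ^ q + (\<alpha> - y0 ^ q) * s = s ^ (q + 1)"
    by (auto simp: algebra_simps)
  finally show ?thesis
    by (simp only: \<gamma>)
qed

lemma trace_one_nonzero: "q > 0 \<Longrightarrow> z ^ q + z = 1 \<Longrightarrow> (z::'a::field) \<noteq> 0"
  by (auto simp: power_0_left)

lemma trace_one_solves_secant_equation:
  fixes \<gamma> z :: "'a::field"
  assumes power_power: "\<And>x::'a. x ^ (q * q) = x"
    and "q > 0" "z ^ q + z = 1"
  defines "s \<equiv> \<gamma> ^ q / z"
  shows "\<gamma> ^ q * s ^ q + \<gamma> * s = s ^ (q + 1)"
proof -
  have "z \<noteq> 0"
    using assms(2,3) by (rule trace_one_nonzero)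
  then have "z ^ q \<noteq> 0"
    by simp
  have "s ^ q = \<gamma> / z ^ q"
    by (simp add: s_def power_divide power_mult[symmetric] power_power)
  then have "\<gamma> ^ q * s ^ q + \<gamma> * s = \<gamma> ^ q * \<gamma> * (z + z ^ q) / (z ^ q * z)"
    using \<open>z \<noteq> 0\<close> \<open>z ^ q \<noteq> 0\<close> by (simp add: s_def field_simps)
  also have "\<dots> = s ^ q * s"
    using \<open>s ^ q = \<gamma> / z ^ q\<close> assms(3) by (simp add: s_def add.commute)
  finally show ?thesis
    by simp
qed

(* For alpha ~= y0^q, the y-coordinates of the points other than (x0, y0) where the curve
   meets the line of slope alpha through (x0, y0). *)
definition secant_ordinates :: "nat \<Rightarrow> 'a::field \<Rightarrow> 'a \<Rightarrow> 'a set" where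
  "secant_ordinates q y0 \<alpha> = (\<lambda>z. y0 + (\<alpha> - y0 ^ q) ^ q / z) ` {z. z ^ q + z = 1}"

definition herm_secant :: "nat \<Rightarrow> 'a::field \<Rightarrow> 'a \<Rightarrow> 'a \<Rightarrow> ('a \<times> 'a) set" where
  "herm_secant q x0 y0 \<alpha> = herm_line \<alpha> (x0 - \<alpha> * y0) ` secant_ordinates q y0 \<alpha>"

lemma herm_line_through: "herm_line \<alpha> (x0 - \<alpha> * y0) (y0 + s) = (x0 + \<alpha> * s, y0 + s)"
  by (simp add: herm_line_def algebra_simps)

lemma secant_ordinates_ne:
  assumes "q > 0" "\<alpha> \<noteq> y0 ^ q" "t \<in> secant_ordinates q y0 \<alpha>"
  shows "t \<noteq> y0"
  using assms by (auto simp: secant_ordinates_def power_0_left)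

lemma card_secant_ordinates:
  fixes y0 \<alpha> :: "'a::field"
  assumes "q > 0" "\<alpha> \<noteq> y0 ^ q"
  shows "card (secant_ordinates q y0 \<alpha>) = card {z::'a. z ^ q + z = 1}"
proof -
  have "inj_on (\<lambda>z. y0 + (\<alpha> - y0 ^ q) ^ q / z) {z. z ^ q + z = 1}"
    using assms trace_one_nonzero[OF \<open>q > 0\<close>] by (intro inj_onI) (auto simp: field_simps)
  then show ?thesis
    by (simp add: secant_ordinates_def card_image)
qed

lemma card_herm_secant:
  fixes x0 y0 \<alpha> :: "'a::field"
  assumes "q > 0" "\<alpha> \<noteq> y0 ^ q"
  shows "card (herm_secant q x0 y0 \<alpha>) = card {z::'a. z ^ q + z = 1}"
proof -
  have "card (herm_secant q x0 y0 \<alpha>) = card (secant_ordinates q y0 \<alpha>)"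
    unfolding herm_secant_def by (rule card_image) (metis inj_herm_line inj_on_subset subset_UNIV)
  then show ?thesis
    using assms by (simp add: card_secant_ordinates)
qed

lemma herm_secant_subset:
  fixes x0 y0 \<alpha> :: "'a::field"
  assumes add_power: "\<And>x y::'a. (x + y) ^ q = x ^ q + y ^ q"
    and power_power: "\<And>x::'a. x ^ (q * q) = x"
    and "q > 0" "(x0, y0) \<in> herm_points q"
  shows "herm_secant q x0 y0 \<alpha> \<subseteq> herm_points q"
proof
  fix Q assume "Q \<in> herm_secant q x0 y0 \<alpha>"
  then obtain z where "z ^ q + z = 1"
    and Q: "Q = herm_line \<alpha> (x0 - \<alpha> * y0) (y0 + (\<alpha> - y0 ^ q) ^ q / z)"
    by (auto simp: herm_secant_def secant_ordinates_def)
  define s where "s = (\<alpha> - y0 ^ q) ^ q / z"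
  have "(\<alpha> - y0 ^ q) ^ q * s ^ q + (\<alpha> - y0 ^ q) * s = s ^ (q + 1)"
    unfolding s_def using power_power \<open>q > 0\<close> \<open>z ^ q + z = 1\<close>
    by (rule trace_one_solves_secant_equation)
  then show "Q \<in> herm_points q"
    unfolding Q herm_line_through s_def[symmetric]
    using herm_points_shift_iff[OF add_power power_power \<open>(x0, y0) \<in> herm_points q\<close>] by blast
qed

lemma disjoint_family_on_herm_secant:
  assumes "q > 0"
  shows "disjoint_family_on (herm_secant q x0 (y0::'a::field)) (- {y0 ^ q})"
  unfolding disjoint_family_on_def
proof (intro ballI impI)
  fix \<alpha> \<alpha>' assume "\<alpha> \<in> - {y0 ^ q}" "\<alpha>' \<in> - {y0 ^ q}" "\<alpha> \<noteq> \<alpha>'"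
  show "herm_secant q x0 y0 \<alpha> \<inter> herm_secant q x0 y0 \<alpha>' = {}"
  proof (rule ccontr)
    assume "herm_secant q x0 y0 \<alpha> \<inter> herm_secant q x0 y0 \<alpha>' \<noteq> {}"
    then obtain t t' where "t \<in> secant_ordinates q y0 \<alpha>" "t' \<in> secant_ordinates q y0 \<alpha>'"
      and "herm_line \<alpha> (x0 - \<alpha> * y0) t = herm_line \<alpha>' (x0 - \<alpha>' * y0) t'"
      unfolding herm_secant_def by blast
    then have "t \<noteq> y0" "t = t'" "(\<alpha> - \<alpha>') * (t - y0) = 0"
      using secant_ordinates_ne[OF \<open>q > 0\<close>] \<open>\<alpha> \<in> - {y0 ^ q}\<close>
      by (auto simp: herm_line_def algebra_simps)
    then show False
      using \<open>\<alpha> \<noteq> \<alpha>'\<close> by simp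
  qed
qed

lemma recovery_set_herm_secant:
  fixes x0 y0 \<alpha> :: "'a::field"
  assumes add_power: "\<And>x y::'a. (x + y) ^ q = x ^ q + y ^ q"
    and power_power: "\<And>x::'a. x ^ (q * q) = x"
    and "q > 0" and P: "(x0, y0) \<in> herm_points q"
    and "\<alpha> \<noteq> y0 ^ q" "card {z::'a. z ^ q + z = 1} = q"
  shows "recovery_set (herm_lifted_code q) (x0, y0) (herm_secant q x0 y0 \<alpha>)"
proof -
  have "herm_line \<alpha> (x0 - \<alpha> * y0) y0 = (x0, y0)"
    using herm_line_through[of \<alpha> x0 y0 0] by simp
  moreover have "y0 \<notin> secant_ordinates q y0 \<alpha>"
    using secant_ordinates_ne[OF \<open>q > 0\<close> \<open>\<alpha> \<noteq> y0 ^ q\<close>] by blast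
  moreover have "card (secant_ordinates q y0 \<alpha>) = q"
    using assms(3,5,6) by (simp add: card_secant_ordinates)
  moreover have "herm_line \<alpha> (x0 - \<alpha> * y0) ` secant_ordinates q y0 \<alpha> \<subseteq> herm_points q"
    using herm_secant_subset[OF add_power power_power \<open>q > 0\<close> P] by (simp add: herm_secant_def)
  ultimately show ?thesis
    unfolding herm_secant_def using recovery_set_herm_line \<open>q > 0\<close> P by metis
qed

lemma herm_secants_through_point:
  fixes x0 y0 :: "'a::{finite,field}"
  assumes add_power: "\<And>x y::'a. (x + y) ^ q = x ^ q + y ^ q"
    and power_power: "\<And>x::'a. x ^ (q * q) = x"
    and "q > 0" and trace: "card {z::'a. z ^ q + z = 1} = q" and P: "(x0, y0) \<in> herm_points q"
  defines "Rs \<equiv> herm_secant q x0 y0 ` (- {y0 ^ q})"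
  shows "card Rs = card (UNIV :: 'a set) - 1" "pairwise disjnt Rs"
    and "\<And>R. R \<in> Rs \<Longrightarrow> R \<subseteq> herm_points q \<and> (x0, y0) \<notin> R \<and> card R = q \<and>
      recovery_set (herm_lifted_code q) (x0, y0) R"
proof -
  have secant: "herm_secant q x0 y0 \<alpha> \<subseteq> herm_points q \<and> (x0, y0) \<notin> herm_secant q x0 y0 \<alpha> \<and>
      card (herm_secant q x0 y0 \<alpha>) = q \<and>
      recovery_set (herm_lifted_code q) (x0, y0) (herm_secant q x0 y0 \<alpha>)"
    if "\<alpha> \<noteq> y0 ^ q" for \<alpha>
  proof -
    have "recovery_set (herm_lifted_code q) (x0, y0) (herm_secant q x0 y0 \<alpha>)"
      using add_power power_power \<open>q > 0\<close> P that trace by (rule recovery_set_herm_secant)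
    then show ?thesis
      using herm_secant_subset[OF add_power power_power \<open>q > 0\<close> P]
        card_herm_secant[OF \<open>q > 0\<close> that] trace
      by (simp add: recovery_set_def)
  qed
  then show "\<And>R. R \<in> Rs \<Longrightarrow> R \<subseteq> herm_points q \<and> (x0, y0) \<notin> R \<and> card R = q \<and>
      recovery_set (herm_lifted_code q) (x0, y0) R"
    by (auto simp: Rs_def)
  have "herm_secant q x0 y0 \<alpha> \<noteq> {}" if "\<alpha> \<in> - {y0 ^ q}" for \<alpha>
    using secant[of \<alpha>] that \<open>q > 0\<close> by force
  moreover have "disjoint_family_on (herm_secant q x0 y0) (- {y0 ^ q})"
    using \<open>q > 0\<close> by (rule disjoint_family_on_herm_secant)
  ultimately have "pairwise disjnt Rs" "inj_on (herm_secant q x0 y0) (- {y0 ^ q})"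
    using disjoint_family_on_iff_disjoint_image unfolding Rs_def by blast+
  then show "pairwise disjnt Rs" "card Rs = card (UNIV :: 'a set) - 1"
    by (simp_all add: Rs_def card_image Compl_eq_Diff_UNIV card_Diff_singleton)
qed

lemma frobenius_of_card_UNIV_eq_square:
  assumes "prime_power q" "card (UNIV :: 'a::{finite,field} set) = q ^ 2"
  shows "q \<ge> 2" "(x + y) ^ q = x ^ q + y ^ q" "x ^ (q * q) = (x::'a)"
proof -
  obtain p k where "prime p" "k > 0" "q = p ^ k"
    using assms(1) unfolding prime_power_def by blast
  then show "q \<ge> 2"
    using prime_ge_2_nat[of p] self_le_power[of p k] by simp
  show "(x + y) ^ q = x ^ q + y ^ q"
    using assms(2) \<open>prime p\<close> \<open>k > 0\<close> \<open>q = p ^ k\<close>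
    by (intro frobenius_add[where n = "2 * k" and k = k]) (simp_all add: power_mult[symmetric] mult.commute)
  show "x ^ (q * q) = x"
    using power_card_UNIV_eq_self[of x] assms(2) by (simp add: power2_eq_square)
qed

theorem mainTheorem2:
  fixes q :: nat
  assumes "prime_power q"
    and "card (UNIV :: 'a::{finite, field} set) = q ^ 2"
  shows "\<forall>P \<in> (herm_points q :: ('a \<times> 'a) set).
           \<exists>Rs :: ('a \<times> 'a) set set.
             card Rs = q ^ 2 - 1 \<and> pairwise disjnt Rs \<and>
             (\<forall>R \<in> Rs. R \<subseteq> herm_points q \<and> P \<notin> R \<and> card R = q \<and>
                recovery_set (herm_lifted_code q :: ('a \<times> 'a \<Rightarrow> 'a) set) P R)"
proof
  fix P assume "P \<in> (herm_points q :: ('a \<times> 'a) set)"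
  then obtain x0 y0 where P: "P = (x0, y0)" "(x0, y0) \<in> herm_points q"
    by (cases P) auto
  note frobenius = frobenius_of_card_UNIV_eq_square[OF assms]
  have "q > 0"
    using frobenius(1) by simp
  have trace: "card {z::'a. z ^ q + z = 1} = q"
    using frobenius(2,3) assms(2) frobenius(1) by (rule card_trace_fibre_one)
  note secants = herm_secants_through_point[OF frobenius(2,3) \<open>q > 0\<close> trace P(2)]
  show "\<exists>Rs. card Rs = q ^ 2 - 1 \<and> pairwise disjnt Rs \<and>
      (\<forall>R \<in> Rs. R \<subseteq> herm_points q \<and> P \<notin> R \<and> card R = q \<and>
         recovery_set (herm_lifted_code q :: ('a \<times> 'a \<Rightarrow> 'a) set) P R)"
    unfolding P using secants assms(2)
    by (intro exI[of _ "herm_secant q x0 y0 ` (- {y0 ^ q})"]) simp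
qed

end
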